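(* Let $q \geq 5$ be a prime power and let $\mathcal{X}$ be a plane curve of degree $q-1$ defined over $\mathbb{F}_q$ without $\mathbb{F}_q$-linear components with $\mathrm{N}_q(\mathcal{X}) = (q-1)^2$. If there are two distinct $\mathbb{F}_q$-lines $l^1_\infty, l^2_\infty$ with $(l^1_\infty \cup l^2_\infty)(\mathbb{F}_q) \subseteq Z(\mathcal{X})$, then $a_0 = 3$.
   Context: $\mathcal{X}(\mathbb{F}_q)=\mathcal{X}\cap\mathbb{P}^2(\mathbb{F}_q)$, $\mathrm{N}_q(\mathcal{X})=\#\mathcal{X}(\mathbb{F}_q)$; "without $\mathbb{F}_q$-linear components" means no line defined over $\mathbb{F}_q$ is a component. $Z(\mathcal{X}) := \mathbb{P}^2(\mathbb{F}_q)\setminus\mathcal{X}(\mathbb{F}_q)$. $a_0$ is the number of $\mathbb{F}_q$-lines containing no point of $\mathcal{X}(\mathbb{F}_q)$. *)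

theory Defs
  imports Main
begin

text \<open>A ternary form over a field 'a is given by its coefficient function:
  F (i,j,k) is the coefficient of the monomial X^i Y^j Z^k.\<close>

type_synonym 'a form3 = "nat \<times> nat \<times> nat \<Rightarrow> 'a"

definition hom_form :: "nat \<Rightarrow> 'a::zero form3 \<Rightarrow> bool" where
  "hom_form d F \<longleftrightarrow> (\<forall>i j k. F (i,j,k) \<noteq> 0 \<longrightarrow> i + j + k = d) \<and> (\<exists>m. F m \<noteq> 0)"

definition eval_form :: "nat \<Rightarrow> 'a::comm_ring_1 form3 \<Rightarrow> 'a \<times> 'a \<times> 'a \<Rightarrow> 'a" where
  "eval_form d F v = (case v of (x,y,z) \<Rightarrow>
     (\<Sum>i\<le>d. \<Sum>j\<le>d. \<Sum>k\<le>d. F (i,j,k) * x ^ i * y ^ j * z ^ k))"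

text \<open>Product of the linear form aX+bY+cZ with a form G.\<close>
definition lin_mult :: "'a \<times> 'a \<times> 'a \<Rightarrow> 'a::comm_ring_1 form3 \<Rightarrow> 'a form3" where
  "lin_mult l G = (\<lambda>(i,j,k). case l of (a,b,c) \<Rightarrow>
      (if i > 0 then a * G (i - 1, j, k) else 0)
    + (if j > 0 then b * G (i, j - 1, k) else 0)
    + (if k > 0 then c * G (i, j, k - 1) else 0))"

definition has_linear_component :: "nat \<Rightarrow> 'a::comm_ring_1 form3 \<Rightarrow> bool" where
  "has_linear_component d F \<longleftrightarrow>
     (\<exists>l G. l \<noteq> (0,0,0) \<and> hom_form (d - 1) G \<and> F = lin_mult l G)"

definition proj_class :: "'a::field \<times> 'a \<times> 'a \<Rightarrow> ('a \<times> 'a \<times> 'a) set" where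
  "proj_class v = (case v of (x,y,z) \<Rightarrow> {(t*x, t*y, t*z) | t. t \<noteq> 0})"

definition P2 :: "('a::field \<times> 'a \<times> 'a) set set" where
  "P2 = {proj_class v | v. v \<noteq> (0,0,0)}"

definition curve_points :: "nat \<Rightarrow> 'a::field form3 \<Rightarrow> ('a \<times> 'a \<times> 'a) set set" where
  "curve_points d F = {P \<in> P2. \<forall>v\<in>P. eval_form d F v = 0}"

definition Nq :: "nat \<Rightarrow> 'a::field form3 \<Rightarrow> nat" where
  "Nq d F = card (curve_points d F)"

definition Zset :: "nat \<Rightarrow> 'a::field form3 \<Rightarrow> ('a \<times> 'a \<times> 'a) set set" where
  "Zset d F = P2 - curve_points d F"

definition line_points :: "'a::field \<times> 'a \<times> 'a \<Rightarrow> ('a \<times> 'a \<times> 'a) set set" where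
  "line_points l = {P \<in> P2. \<forall>v\<in>P. (case l of (a,b,c) \<Rightarrow> case v of (x,y,z) \<Rightarrow>
      a*x + b*y + c*z = 0)}"

definition Fq_lines :: "('a::field \<times> 'a \<times> 'a) set set set" where
  "Fq_lines = {line_points l | l. l \<noteq> (0,0,0)}"

definition a0 :: "nat \<Rightarrow> 'a::field form3 \<Rightarrow> nat" where
  "a0 d F = card {L \<in> Fq_lines. L \<inter> curve_points d F = {}}"

end

theory Submission
  imports Defs "HOL-Computational_Algebra.Polynomial"
begin

text \<open>Choose coordinates in which the two lines are \<open>z = 0\<close> and \<open>y = 0\<close>; then every rational point
  of the curve is \<open>(x : y : 1)\<close> with \<open>y \<noteq> 0\<close>. For fixed \<open>y \<noteq> 0\<close>, \<open>F(x, y, 1)\<close> is a polynomial in \<open>x\<close>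
  of degree at most \<open>q - 1\<close> whose leading coefficient \<open>F(1, 0, 0)\<close> is nonzero, because \<open>(1 : 0 : 0)\<close>
  lies on both lines. So each of the \<open>q - 1\<close> fibers has at most \<open>q - 1\<close> points, and
  \<open>N\<^sub>q = (q - 1)\<^sup>2\<close> forces every fiber to miss exactly one abscissa \<open>g(y)\<close>. The root sum of the
  fiber polynomial is \<open>\<Sum>\<bbbF>\<^sub>q - g(y)\<close>, while its subleading coefficient is affine in \<open>y\<close>; hence
  \<open>g(y) = \<alpha> y + \<beta>\<close>. The lines \<open>z = 0\<close>, \<open>y = 0\<close> and \<open>x = \<alpha> y + \<beta> z\<close> avoid the curve, and every other
  line meets some fiber away from its missing abscissa.\<close>

section \<open>Subleading coefficients\<close>

text \<open>For \<open>degree p \<le> m\<close> this is the coefficient just below the top one; the junk value 0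
  at \<open>m = 0\<close> makes the product rule \<open>subtop_coeff_mult\<close> hold without side conditions.\<close>
definition subtop_coeff :: "'a::zero poly \<Rightarrow> nat \<Rightarrow> 'a" where
  "subtop_coeff p m = (if m = 0 then 0 else coeff p (m - 1))"

lemma subtop_coeff_sum: "subtop_coeff (sum f A) m = (\<Sum>x\<in>A. subtop_coeff (f x) m)"
  by (simp add: subtop_coeff_def coeff_sum)

lemma subtop_coeff_smult: "subtop_coeff (smult c p) m = c * subtop_coeff p m"
  by (simp add: subtop_coeff_def)

lemma coeff_mult_at_degree_bounds:
  fixes p q :: "'a::comm_semiring_0 poly"
  assumes "degree p \<le> m" "degree q \<le> n"
  shows "coeff (p * q) (m + n) = coeff p m * coeff q n"
proof -
  have "coeff (p * q) (m + n) = (\<Sum>i\<le>m+n. coeff p i * coeff q (m+n-i))"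
    by (rule coeff_mult)
  also have "\<dots> = (\<Sum>i\<in>{m}. coeff p i * coeff q (m+n-i))"
  proof (rule sum.mono_neutral_right)
    show "\<forall>i\<in>{..m+n} - {m}. coeff p i * coeff q (m+n-i) = 0"
    proof
      fix i assume "i \<in> {..m+n} - {m}"
      then have "i > m \<or> m+n-i > n" by auto
      then show "coeff p i * coeff q (m+n-i) = 0"
        using assms by (auto simp: coeff_eq_0)
    qed
  qed auto
  finally show ?thesis by simp
qed

lemma subtop_coeff_mult:
  fixes p q :: "'a::comm_semiring_0 poly"
  assumes "degree p \<le> m" "degree q \<le> n"
  shows "subtop_coeff (p * q) (m + n) = subtop_coeff p m * coeff q n + coeff p m * subtop_coeff q n"
proof (cases "m = 0 \<or> n = 0")
  case True
  then consider "degree p = 0" "m = 0" | "degree q = 0" "n = 0"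
    using assms by auto
  then show ?thesis
    by cases (auto elim!: degree_eq_zeroE simp: subtop_coeff_def mult.commute)
next
  case False
  then have m: "m > 0" and n: "n > 0" by auto
  have "coeff (p * q) (m + n - 1) = (\<Sum>i\<le>m+n-1. coeff p i * coeff q (m+n-1-i))"
    by (rule coeff_mult)
  also have "\<dots> = (\<Sum>i\<in>{m-1, m}. coeff p i * coeff q (m+n-1-i))"
  proof (rule sum.mono_neutral_right)
    show "\<forall>i\<in>{..m+n-1} - {m-1,m}. coeff p i * coeff q (m+n-1-i) = 0"
    proof
      fix i assume "i \<in> {..m+n-1} - {m-1,m}"
      then have "i > m \<or> m+n-1-i > n" using m n by auto
      then show "coeff p i * coeff q (m+n-1-i) = 0"
        using assms by (auto simp: coeff_eq_0)
    qed
  qed (use m n in auto)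
  also have "\<dots> = coeff p (m-1) * coeff q n + coeff p m * coeff q (n-1)"
    using m n by (simp add: Suc_diff_Suc)
  finally show ?thesis using m n by (simp add: subtop_coeff_def)
qed

lemma degree_mult_le_bounds:
  fixes p q :: "'a::comm_semiring_0 poly"
  shows "degree p \<le> m \<Longrightarrow> degree q \<le> n \<Longrightarrow> degree (p * q) \<le> m + n"
  by (meson add_le_mono degree_mult_le order_trans)

lemma linear_power_coeffs:
  fixes a b :: "'a::comm_semiring_1"
  shows "degree ([:a,b:]^n) \<le> n \<and> coeff ([:a,b:]^n) n = b^n
    \<and> subtop_coeff ([:a,b:]^n) n = of_nat n * a * b^(n-1)"
proof (induction n)
  case 0
  then show ?case by (simp add: subtop_coeff_def)
next
  case (Suc n)
  have lin: "degree [:a,b:] \<le> 1" by simp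
  have "b * (of_nat n * a * b^(n-1)) = of_nat n * a * b^n"
    by (cases n) (simp_all add: algebra_simps)
  then show ?case
    using degree_mult_le_bounds[OF lin, of "[:a,b:]^n" n]
      coeff_mult_at_degree_bounds[OF lin, of "[:a,b:]^n" n]
      subtop_coeff_mult[OF lin, of "[:a,b:]^n" n] Suc
    by (simp add: subtop_coeff_def algebra_simps)
qed

lemma linear_factors_coeffs:
  fixes A :: "'a::comm_ring_1 set"
  assumes "finite A"
  shows "degree (\<Prod>r\<in>A. [:-r,1:]) \<le> card A \<and> coeff (\<Prod>r\<in>A. [:-r,1:]) (card A) = 1
    \<and> subtop_coeff (\<Prod>r\<in>A. [:-r,1:]) (card A) = - \<Sum>A"
  using assms
proof (induction A rule: finite_induct)
  case empty
  then show ?case by (simp add: subtop_coeff_def)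
next
  case (insert a A)
  have lin: "degree [:-a,1:] \<le> 1" by simp
  show ?case
    using degree_mult_le_bounds[OF lin, of _ "card A"]
      coeff_mult_at_degree_bounds[OF lin, of _ "card A"]
      subtop_coeff_mult[OF lin, of _ "card A"] insert
    by (simp add: subtop_coeff_def)
qed

lemma subtop_coeff_if_roots_all_but:
  fixes p :: "'a::{finite,field} poly"
  assumes "card (UNIV :: 'a set) = d + 1" "degree p \<le> d"
    and "\<And>x. x \<noteq> g \<Longrightarrow> poly p x = 0"
  shows "subtop_coeff p d = coeff p d * (g - \<Sum>UNIV)"
proof -
  define A where "A = UNIV - {g}"
  define P where "P = (\<Prod>r\<in>A. [:-r,1:])"
  have card_A: "card A = d" using assms(1) by (simp add: A_def)
  have P: "degree P \<le> d" "coeff P d = 1" "subtop_coeff P d = - \<Sum>A"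
    using linear_factors_coeffs[of A] card_A by (simp_all add: P_def)
  have "p = smult (coeff p d) P"
  proof (rule poly_eqI_degree_lead_coeff[where n = d and A = A])
    show "degree (smult (coeff p d) P) \<le> d"
      using P(1) degree_smult_le order_trans by blast
    show "poly p z = poly (smult (coeff p d) P) z" if "z \<in> A" for z
      using that assms(3) by (auto simp: A_def P_def poly_prod)
  qed (use assms(2) P card_A in auto)
  then have "subtop_coeff p d = coeff p d * - \<Sum>A"
    by (metis P(3) subtop_coeff_smult)
  then show ?thesis by (simp add: A_def sum_diff1)
qed

section \<open>Vectors and the projective plane\<close>

definition dot3 :: "'a::comm_ring_1 \<times> 'a \<times> 'a \<Rightarrow> 'a \<times> 'a \<times> 'a \<Rightarrow> 'a" where
  "dot3 u v = fst u * fst v + fst (snd u) * fst (snd v) + snd (snd u) * snd (snd v)"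

definition scale3 :: "'a::comm_ring_1 \<Rightarrow> 'a \<times> 'a \<times> 'a \<Rightarrow> 'a \<times> 'a \<times> 'a" where
  "scale3 t v = (t * fst v, t * fst (snd v), t * snd (snd v))"

definition add3 :: "'a::comm_ring_1 \<times> 'a \<times> 'a \<Rightarrow> 'a \<times> 'a \<times> 'a \<Rightarrow> 'a \<times> 'a \<times> 'a" where
  "add3 u v = (fst u + fst v, fst (snd u) + fst (snd v), snd (snd u) + snd (snd v))"

definition cross3 :: "'a::comm_ring_1 \<times> 'a \<times> 'a \<Rightarrow> 'a \<times> 'a \<times> 'a \<Rightarrow> 'a \<times> 'a \<times> 'a" where
  "cross3 u v = (fst (snd u) * snd (snd v) - snd (snd u) * fst (snd v),
                 snd (snd u) * fst v - fst u * snd (snd v),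
                 fst u * fst (snd v) - fst (snd u) * fst v)"

lemma dot3_commute: "dot3 u v = dot3 v u"
  by (simp add: dot3_def algebra_simps)

lemma dot3_add3_right [simp]: "dot3 l (add3 u v) = dot3 l u + dot3 l v"
  by (simp add: dot3_def add3_def algebra_simps)

lemma dot3_add3_left [simp]: "dot3 (add3 u v) l = dot3 u l + dot3 v l"
  by (simp add: dot3_def add3_def algebra_simps)

lemma dot3_scale3_right [simp]: "dot3 l (scale3 t v) = t * dot3 l v"
  by (simp add: dot3_def scale3_def algebra_simps)

lemma dot3_scale3_left [simp]: "dot3 (scale3 t v) l = t * dot3 v l"
  by (simp add: dot3_def scale3_def algebra_simps)

lemma dot3_zero_left [simp]: "dot3 (0,0,0) v = 0"
  by (simp add: dot3_def)

lemma dot3_zero_right [simp]: "dot3 v (0,0,0) = 0"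
  by (simp add: dot3_def)

lemma scale3_add3: "scale3 t (add3 u v) = add3 (scale3 t u) (scale3 t v)"
  by (simp add: scale3_def add3_def algebra_simps)

lemma scale3_scale3: "scale3 s (scale3 t v) = scale3 (s * t) v"
  by (simp add: scale3_def algebra_simps)

lemma scale3_one [simp]: "scale3 1 v = v"
  by (simp add: scale3_def)

lemma dot3_eq_zero_all_imp_zero:
  fixes w :: "'a::comm_ring_1 \<times> 'a \<times> 'a"
  assumes "\<And>r. dot3 r w = 0" shows "w = (0,0,0)"
  using assms[of "(1,0,0)"] assms[of "(0,1,0)"] assms[of "(0,0,1)"]
  by (cases w) (simp add: dot3_def)

lemma dot3_cross3_cyclic: "dot3 u (cross3 v w) = dot3 v (cross3 w u)"
  by (simp add: dot3_def cross3_def algebra_simps)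

lemma dot3_cross3_self_left [simp]: "dot3 u (cross3 u w) = 0"
  by (simp add: dot3_def cross3_def algebra_simps)

lemma dot3_cross3_self_right [simp]: "dot3 u (cross3 w u) = 0"
  by (simp add: dot3_def cross3_def algebra_simps)

lemma scale3_dot3_cross3:
  "scale3 (dot3 r (cross3 m l)) v =
     add3 (scale3 (dot3 r v) (cross3 m l))
       (add3 (scale3 (dot3 m v) (cross3 l r)) (scale3 (dot3 l v) (cross3 r m)))"
  by (cases r; cases l; cases m; cases v)
    (simp add: dot3_def cross3_def scale3_def add3_def, simp add: algebra_simps)

lemma scale3_dot3_eq_if_cross3_zero:
  fixes l m v :: "'a::idom \<times> 'a \<times> 'a"
  assumes "cross3 m l = (0,0,0)"
  shows "scale3 (dot3 l v) m = scale3 (dot3 m v) l"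
proof -
  obtain a1 a2 a3 where l: "l = (a1,a2,a3)" by (cases l)
  obtain b1 b2 b3 where m: "m = (b1,b2,b3)" by (cases m)
  obtain v1 v2 v3 where v: "v = (v1,v2,v3)" by (cases v)
  have "b2 * a3 = b3 * a2" "b3 * a1 = b1 * a3" "b1 * a2 = b2 * a1"
    using assms by (auto simp: cross3_def l m)
  then show ?thesis
    by (simp add: scale3_def dot3_def l m v, intro conjI; algebra)
qed

lemma scale3_eq_zero_iff [simp]:
  fixes v :: "'a::idom \<times> 'a \<times> 'a"
  shows "scale3 t v = (0,0,0) \<longleftrightarrow> t = 0 \<or> v = (0,0,0)"
  by (cases v) (auto simp: scale3_def)

lemma proj_class_conv: "proj_class v = {scale3 t v | t. t \<noteq> 0}"
  by (cases v) (simp add: proj_class_def scale3_def)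

lemma proj_class_self: "v \<in> proj_class (v::'a::field \<times> 'a \<times> 'a)"
  unfolding proj_class_conv by (auto intro!: exI[of _ 1])

lemma proj_class_scale3:
  fixes v :: "'a::field \<times> 'a \<times> 'a"
  assumes "t \<noteq> 0" shows "proj_class (scale3 t v) = proj_class v"
  unfolding proj_class_conv scale3_scale3
proof (intro set_eqI iffI)
  fix u assume "u \<in> {scale3 (s * t) v |s. s \<noteq> 0}"
  then show "u \<in> {scale3 s v |s. s \<noteq> 0}" using assms by auto
next
  fix u assume "u \<in> {scale3 s v |s. s \<noteq> 0}"
  then obtain s where "s \<noteq> 0" "u = scale3 s v" by blast
  then show "u \<in> {scale3 (s * t) v |s. s \<noteq> 0}"
    using assms by (auto intro!: exI[of _ "s / t"])
qed

lemma proj_class_eq_imp_scale3: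
  fixes u v :: "'a::field \<times> 'a \<times> 'a"
  assumes "proj_class u = proj_class v" shows "\<exists>t. u = scale3 t v"
proof -
  have "u \<in> proj_class v" using proj_class_self[of u] assms by simp
  then show ?thesis by (auto simp: proj_class_conv)
qed

lemma proj_class_in_P2: "v \<noteq> (0,0,0) \<Longrightarrow> proj_class v \<in> P2"
  unfolding P2_def by blast

lemma P2_memE:
  assumes "P \<in> P2"
  obtains v where "v \<noteq> (0,0,0)" "P = proj_class v"
  using assms unfolding P2_def by blast

lemma eval_form_scale3:
  fixes F :: "'a::comm_ring_1 form3"
  assumes "hom_form d F"
  shows "eval_form d F (scale3 t v) = t ^ d * eval_form d F v"
proof -
  obtain a b c where v: "v = (a,b,c)" by (cases v)
  have "F(i,j,k) * (t*a)^i * (t*b)^j * (t*c)^k = t^d * (F(i,j,k) * a^i * b^j * c^k)" for i j k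
  proof (cases "F(i,j,k) = 0")
    case False
    then have "d = i + j + k" using assms by (auto simp: hom_form_def)
    then show ?thesis by (simp add: power_mult_distrib power_add algebra_simps)
  qed simp
  then show ?thesis by (simp add: eval_form_def scale3_def v sum_distrib_left)
qed

lemma proj_class_in_curve_points_iff:
  fixes F :: "'a::field form3"
  assumes "hom_form d F" "v \<noteq> (0,0,0)"
  shows "proj_class v \<in> curve_points d F \<longleftrightarrow> eval_form d F v = 0"
proof
  assume "proj_class v \<in> curve_points d F"
  then show "eval_form d F v = 0" using proj_class_self[of v] by (auto simp: curve_points_def)
next
  assume "eval_form d F v = 0"
  then have "eval_form d F u = 0" if "u \<in> proj_class v" for u
    using that by (auto simp: proj_class_conv eval_form_scale3[OF assms(1)])
  then show "proj_class v \<in> curve_points d F"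
    using proj_class_in_P2[OF assms(2)] by (simp add: curve_points_def)
qed

lemma line_points_conv: "line_points l = {P \<in> P2. \<forall>v\<in>P. dot3 l v = 0}"
  unfolding line_points_def by (cases l) (auto simp: dot3_def split: prod.splits)

lemma proj_class_in_line_points_iff:
  fixes l v :: "'a::field \<times> 'a \<times> 'a"
  assumes "v \<noteq> (0,0,0)"
  shows "proj_class v \<in> line_points l \<longleftrightarrow> dot3 l v = 0"
proof
  assume "proj_class v \<in> line_points l"
  then show "dot3 l v = 0" using proj_class_self[of v] by (auto simp: line_points_conv)
next
  assume "dot3 l v = 0"
  then show "proj_class v \<in> line_points l"
    using proj_class_in_P2[OF assms] by (auto simp: line_points_conv proj_class_conv)
qed

lemma line_points_in_Fq_lines: "l \<noteq> (0,0,0) \<Longrightarrow> line_points l \<in> Fq_lines"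
  unfolding Fq_lines_def by blast

lemma line_points_cong:
  "(\<And>v. dot3 l v = 0 \<longleftrightarrow> dot3 m v = 0) \<Longrightarrow> line_points l = line_points m"
  by (simp add: line_points_conv)

text \<open>\<open>(e1, e2, e3)\<close> is the basis dual to the functionals \<open>(r, l2, l1)\<close>: in the coordinates
  \<open>x e1 + y e2 + z e3\<close> the lines \<open>l1\<close> and \<open>l2\<close> become \<open>z = 0\<close> and \<open>y = 0\<close>.\<close>
locale dual_frame =
  fixes l1 l2 r e1 e2 e3 :: "'a::field \<times> 'a \<times> 'a"
  assumes dual: "dot3 r e1 = 1" "dot3 r e2 = 0" "dot3 r e3 = 0"
    "dot3 l2 e1 = 0" "dot3 l2 e2 = 1" "dot3 l2 e3 = 0"
    "dot3 l1 e1 = 0" "dot3 l1 e2 = 0" "dot3 l1 e3 = 1"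
    and expand: "\<And>v. v = add3 (scale3 (dot3 r v) e1) (add3 (scale3 (dot3 l2 v) e2) (scale3 (dot3 l1 v) e3))"

lemma dual_frame_exists:
  fixes l1 l2 :: "'a::field \<times> 'a \<times> 'a"
  assumes "l1 \<noteq> (0,0,0)" "l2 \<noteq> (0,0,0)" "line_points l1 \<noteq> line_points l2"
  shows "\<exists>r e1 e2 e3. dual_frame l1 l2 r e1 e2 e3"
proof -
  have "cross3 l2 l1 \<noteq> (0,0,0)"
  proof
    assume "cross3 l2 l1 = (0,0,0)"
    then have "scale3 (dot3 l1 v) l2 = scale3 (dot3 l2 v) l1" for v
      by (rule scale3_dot3_eq_if_cross3_zero)
    then have "dot3 l1 v = 0 \<longleftrightarrow> dot3 l2 v = 0" for v
      using assms(1,2) by (metis scale3_eq_zero_iff)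
    then show False using assms(3) line_points_cong by blast
  qed
  then obtain r where D: "dot3 r (cross3 l2 l1) \<noteq> 0"
    using dot3_eq_zero_all_imp_zero by blast
  define c where "c = 1 / dot3 r (cross3 l2 l1)"
  have "dual_frame l1 l2 r (scale3 c (cross3 l2 l1)) (scale3 c (cross3 l1 r)) (scale3 c (cross3 r l2))"
  proof
    have "dot3 l1 (cross3 r l2) = dot3 r (cross3 l2 l1)" "dot3 l2 (cross3 l1 r) = dot3 r (cross3 l2 l1)"
      using dot3_cross3_cyclic by metis+
    then show "dot3 r (scale3 c (cross3 l2 l1)) = 1" "dot3 r (scale3 c (cross3 l1 r)) = 0"
      "dot3 r (scale3 c (cross3 r l2)) = 0" "dot3 l2 (scale3 c (cross3 l2 l1)) = 0"
      "dot3 l2 (scale3 c (cross3 l1 r)) = 1" "dot3 l2 (scale3 c (cross3 r l2)) = 0"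
      "dot3 l1 (scale3 c (cross3 l2 l1)) = 0" "dot3 l1 (scale3 c (cross3 l1 r)) = 0"
      "dot3 l1 (scale3 c (cross3 r l2)) = 1"
      using D dot3_cross3_cyclic[of r l1 r] by (simp_all add: c_def)
  next
    fix v
    have "v = scale3 c (scale3 (dot3 r (cross3 l2 l1)) v)"
      using D by (simp add: c_def scale3_scale3)
    then show "v = add3 (scale3 (dot3 r v) (scale3 c (cross3 l2 l1)))
        (add3 (scale3 (dot3 l2 v) (scale3 c (cross3 l1 r))) (scale3 (dot3 l1 v) (scale3 c (cross3 r l2))))"
      unfolding scale3_dot3_cross3 by (simp add: scale3_add3 scale3_scale3 mult.commute)
  qed
  then show ?thesis by blast
qed

section \<open>Restricting a form to a line\<close>

definition line_poly :: "nat \<Rightarrow> 'a::comm_ring_1 form3 \<Rightarrow> 'a \<times> 'a \<times> 'a \<Rightarrow> 'a \<times> 'a \<times> 'a \<Rightarrow> 'a poly" where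
  "line_poly d F P Q = (case P of (p1,p2,p3) \<Rightarrow> case Q of (q1,q2,q3) \<Rightarrow>
     \<Sum>i\<le>d. \<Sum>j\<le>d. \<Sum>k\<le>d. smult (F(i,j,k)) ([:p1,q1:]^i * [:p2,q2:]^j * [:p3,q3:]^k))"

definition form_grad :: "nat \<Rightarrow> 'a::comm_ring_1 form3 \<Rightarrow> 'a \<times> 'a \<times> 'a \<Rightarrow> 'a \<times> 'a \<times> 'a" where
  "form_grad d F Q = (case Q of (q1,q2,q3) \<Rightarrow>
     ((\<Sum>i\<le>d. \<Sum>j\<le>d. \<Sum>k\<le>d. F(i,j,k) * (of_nat i * q1^(i-1) * q2^j * q3^k)),
      (\<Sum>i\<le>d. \<Sum>j\<le>d. \<Sum>k\<le>d. F(i,j,k) * (of_nat j * q1^i * q2^(j-1) * q3^k)),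
      (\<Sum>i\<le>d. \<Sum>j\<le>d. \<Sum>k\<le>d. F(i,j,k) * (of_nat k * q1^i * q2^j * q3^(k-1)))))"

lemma poly_line_poly: "poly (line_poly d F P Q) t = eval_form d F (add3 P (scale3 t Q))"
  by (cases P; cases Q) (simp add: line_poly_def eval_form_def add3_def scale3_def poly_sum algebra_simps)

lemma monomial_line_coeffs:
  fixes p1 p2 p3 q1 q2 q3 :: "'a::comm_ring_1" and i j k :: nat
  defines "M \<equiv> [:p1,q1:]^i * [:p2,q2:]^j * [:p3,q3:]^k"
  shows "degree M \<le> i + j + k \<and> coeff M (i+j+k) = q1^i * q2^j * q3^k
    \<and> subtop_coeff M (i+j+k) =
        p1 * (of_nat i * q1^(i-1) * q2^j * q3^k) + p2 * (of_nat j * q1^i * q2^(j-1) * q3^k)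
      + p3 * (of_nat k * q1^i * q2^j * q3^(k-1))"
proof -
  note a = linear_power_coeffs[of p1 q1 i] and b = linear_power_coeffs[of p2 q2 j]
    and c = linear_power_coeffs[of p3 q3 k]
  have d12: "degree ([:p1,q1:]^i * [:p2,q2:]^j) \<le> i + j"
    using a b by (simp add: degree_mult_le_bounds)
  show ?thesis
    unfolding M_def
    using degree_mult_le_bounds[OF d12, of "[:p3,q3:]^k" k]
      coeff_mult_at_degree_bounds[OF d12, of "[:p3,q3:]^k" k]
      subtop_coeff_mult[OF d12, of "[:p3,q3:]^k" k]
      coeff_mult_at_degree_bounds[of "[:p1,q1:]^i" i "[:p2,q2:]^j" j]
      subtop_coeff_mult[of "[:p1,q1:]^i" i "[:p2,q2:]^j" j] a b c
    by (simp add: algebra_simps)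
qed

lemma line_poly_coeffs:
  fixes F :: "'a::comm_ring_1 form3"
  assumes "hom_form d F"
  shows "degree (line_poly d F P Q) \<le> d \<and> coeff (line_poly d F P Q) d = eval_form d F Q
    \<and> subtop_coeff (line_poly d F P Q) d = dot3 P (form_grad d F Q)"
proof -
  obtain p1 p2 p3 where P: "P = (p1,p2,p3)" by (cases P)
  obtain q1 q2 q3 where Q: "Q = (q1,q2,q3)" by (cases Q)
  let ?T = "\<lambda>i j k. smult (F(i,j,k)) ([:p1,q1:]^i * [:p2,q2:]^j * [:p3,q3:]^k)"
  have term_coeffs: "degree (?T i j k) \<le> d \<and> coeff (?T i j k) d = F(i,j,k) * (q1^i * q2^j * q3^k)
    \<and> subtop_coeff (?T i j k) d = F(i,j,k) * (p1 * (of_nat i * q1^(i-1) * q2^j * q3^k)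
        + p2 * (of_nat j * q1^i * q2^(j-1) * q3^k) + p3 * (of_nat k * q1^i * q2^j * q3^(k-1)))"
    for i j k
  proof (cases "F(i,j,k) = 0")
    case False
    then have "i + j + k = d" using assms by (auto simp: hom_form_def)
    then show ?thesis
      using monomial_line_coeffs[of p1 q1 i p2 q2 j p3 q3 k]
      by (auto simp: subtop_coeff_smult intro: order_trans[OF degree_smult_le])
  qed (simp add: subtop_coeff_def)
  have "degree (line_poly d F P Q) \<le> d"
    unfolding line_poly_def P Q using term_coeffs by (auto intro!: degree_sum_le)
  moreover have "coeff (line_poly d F P Q) d = eval_form d F Q"
    unfolding line_poly_def eval_form_def P Q
    by (simp only: coeff_sum term_coeffs prod.case) (simp add: algebra_simps)
  moreover have "subtop_coeff (line_poly d F P Q) d = dot3 P (form_grad d F Q)"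
    unfolding line_poly_def form_grad_def dot3_def P Q
    by (simp only: subtop_coeff_sum term_coeffs prod.case)
      (simp add: algebra_simps sum_distrib_left sum.distrib)
  ultimately show ?thesis by blast
qed

section \<open>The curve in an affine chart\<close>

context dual_frame
begin

definition chart :: "'a \<Rightarrow> 'a \<Rightarrow> 'a \<times> 'a \<times> 'a" where
  "chart x y = add3 (scale3 x e1) (add3 (scale3 y e2) e3)"

lemma dot3_chart: "dot3 l (chart x y) = x * dot3 l e1 + y * dot3 l e2 + dot3 l e3"
  by (simp add: chart_def)

lemma dot3_expand: "dot3 l v = dot3 l e1 * dot3 r v + dot3 l e2 * dot3 l2 v + dot3 l e3 * dot3 l1 v"
  by (subst expand[of v]) (simp add: algebra_simps)

lemma chart_nonzero: "chart x y \<noteq> (0,0,0)"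
  using dot3_chart[of l1 x y] dual by auto

lemma e1_nonzero: "e1 \<noteq> (0,0,0)"
  using dual by auto

lemma proj_class_chart_in_line_points_iff:
  "proj_class (chart x y) \<in> line_points l \<longleftrightarrow> x * dot3 l e1 + y * dot3 l e2 + dot3 l e3 = 0"
  by (simp add: proj_class_in_line_points_iff[OF chart_nonzero] dot3_chart)

lemma P2_off_line1_chart:
  assumes "P \<in> P2" "P \<notin> line_points l1"
  obtains x y where "P = proj_class (chart x y)"
proof -
  obtain v where v: "v \<noteq> (0,0,0)" "P = proj_class v"
    using assms(1) by (rule P2_memE)
  have z: "dot3 l1 v \<noteq> 0"
    using assms(2) v proj_class_in_line_points_iff by blast
  have "scale3 (dot3 l1 v) (chart (dot3 r v / dot3 l1 v) (dot3 l2 v / dot3 l1 v)) = v"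
    using z expand[of v] by (simp add: chart_def scale3_add3 scale3_scale3)
  then have "P = proj_class (chart (dot3 r v / dot3 l1 v) (dot3 l2 v / dot3 l1 v))"
    using proj_class_scale3[OF z] v(2) by metis
  then show ?thesis by (rule that)
qed

lemma proj_class_chart_inj:
  assumes "proj_class (chart x y) = proj_class (chart x' y')"
  shows "x = x' \<and> y = y'"
proof -
  obtain t where t: "chart x y = scale3 t (chart x' y')"
    using proj_class_eq_imp_scale3[OF assms] by blast
  have "dot3 l1 (chart x y) = t * dot3 l1 (chart x' y')" "dot3 r (chart x y) = t * dot3 r (chart x' y')"
    "dot3 l2 (chart x y) = t * dot3 l2 (chart x' y')"
    by (simp_all add: t)
  then show ?thesis by (simp add: dot3_chart dual)
qed

end

lemma affine_eq_zero_on_nonzero: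
  fixes u v :: "'a::{finite,field}"
  assumes "card (UNIV :: 'a set) > 2" and "\<And>y. y \<noteq> 0 \<Longrightarrow> u * y + v = 0"
  shows "u = 0 \<and> v = 0"
proof -
  have "\<exists>y::'a. y \<notin> {0, 1}"
  proof (rule ccontr)
    assume "\<nexists>y::'a. y \<notin> {0, 1}"
    then have "(UNIV :: 'a set) = {0, 1}" by blast
    then have "card (UNIV :: 'a set) = card {0 :: 'a, 1}" by (rule arg_cong)
    also have "\<dots> = 2" by simp
    finally show False using assms(1) by simp
  qed
  then obtain y :: 'a where y: "y \<noteq> 0" "y \<noteq> 1" by blast
  have "u * (y - 1) = (u * y + v) - (u * 1 + v)" by (simp add: algebra_simps)
  also have "\<dots> = 0" using assms(2)[OF y(1)] assms(2)[of 1] by simp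
  finally have "u * (y - 1) = 0" .
  then have "u = 0" using y(2) by simp
  then show ?thesis using assms(2)[of 1] by simp
qed

locale curve_in_frame = dual_frame l1 l2 r e1 e2 e3
  for l1 l2 r e1 e2 e3 :: "'a::{finite,field} \<times> 'a \<times> 'a" +
  fixes d :: nat and F :: "'a form3"
  assumes hom: "hom_form d F"
    and card_field: "card (UNIV :: 'a set) = d + 1"
    and line1_off_curve: "line_points l1 \<inter> curve_points d F = {}"
    and line2_off_curve: "line_points l2 \<inter> curve_points d F = {}"
    and card_curve_points: "card (curve_points d F) = d * d"
begin

definition fiber :: "'a \<Rightarrow> 'a set" where
  "fiber y = {x. eval_form d F (chart x y) = 0}"

lemma proj_class_chart_in_curve_points_iff:
  "proj_class (chart x y) \<in> curve_points d F \<longleftrightarrow> x \<in> fiber y"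
  by (simp add: proj_class_in_curve_points_iff[OF hom chart_nonzero] fiber_def)

lemma curve_points_chartE:
  assumes "P \<in> curve_points d F"
  obtains x y where "y \<noteq> 0" "x \<in> fiber y" "P = proj_class (chart x y)"
proof -
  have "P \<in> P2" "P \<notin> line_points l1"
    using assms line1_off_curve by (auto simp: curve_points_def)
  then obtain x y where xy: "P = proj_class (chart x y)"
    by (rule P2_off_line1_chart)
  have "P \<notin> line_points l2" using assms line2_off_curve by blast
  then have "y \<noteq> 0" by (simp add: xy proj_class_chart_in_line_points_iff dual)
  moreover have "x \<in> fiber y" using assms by (simp add: xy proj_class_chart_in_curve_points_iff)
  ultimately show ?thesis using xy that by blast
qed

lemma curve_points_eq_chart_image:
  "curve_points d F = (\<lambda>(y,x). proj_class (chart x y)) ` (SIGMA y:-{0}. fiber y)"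
proof (intro equalityI subsetI)
  fix P assume "P \<in> curve_points d F"
  then obtain x y where "y \<noteq> 0" "x \<in> fiber y" "P = proj_class (chart x y)"
    by (rule curve_points_chartE)
  then show "P \<in> (\<lambda>(y,x). proj_class (chart x y)) ` (SIGMA y:-{0}. fiber y)"
    by force
next
  fix P assume "P \<in> (\<lambda>(y,x). proj_class (chart x y)) ` (SIGMA y:-{0}. fiber y)"
  then show "P \<in> curve_points d F" by (auto simp: proj_class_chart_in_curve_points_iff)
qed

lemma sum_card_fibers: "(\<Sum>y\<in>-{0}. card (fiber y)) = d * d"
proof -
  have "inj_on (\<lambda>(y,x). proj_class (chart x y)) (SIGMA y:-{0}. fiber y)"
    by (auto intro!: inj_onI dest: proj_class_chart_inj)
  then have "card (curve_points d F) = card (SIGMA y:-{0}. fiber y)"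
    by (simp add: curve_points_eq_chart_image card_image)
  also have "\<dots> = (\<Sum>y\<in>-{0}. card (fiber y))"
    by (rule card_SigmaI) auto
  finally show ?thesis using card_curve_points by simp
qed

definition fiber_poly :: "'a \<Rightarrow> 'a poly" where
  "fiber_poly y = line_poly d F (chart 0 y) e1"

lemma poly_fiber_poly: "poly (fiber_poly y) x = eval_form d F (chart x y)"
proof -
  have "add3 (chart 0 y) (scale3 x e1) = chart x y"
    by (simp add: chart_def add3_def scale3_def algebra_simps)
  then show ?thesis by (simp add: fiber_poly_def poly_line_poly)
qed

lemma e1_off_curve: "eval_form d F e1 \<noteq> 0"
proof
  assume "eval_form d F e1 = 0"
  then have "proj_class e1 \<in> curve_points d F"
    by (simp add: proj_class_in_curve_points_iff[OF hom e1_nonzero])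
  moreover have "proj_class e1 \<in> line_points l1"
    by (simp add: proj_class_in_line_points_iff[OF e1_nonzero] dual)
  ultimately show False using line1_off_curve by blast
qed

lemma fiber_poly_coeffs:
  "degree (fiber_poly y) \<le> d" "coeff (fiber_poly y) d = eval_form d F e1"
  "subtop_coeff (fiber_poly y) d = y * dot3 e2 (form_grad d F e1) + dot3 e3 (form_grad d F e1)"
  using line_poly_coeffs[OF hom, of "chart 0 y" e1] by (simp_all add: fiber_poly_def chart_def)

lemma card_fiber_le: "card (fiber y) \<le> d"
proof -
  have "fiber_poly y \<noteq> 0"
    using fiber_poly_coeffs(2)[of y] e1_off_curve by auto
  then have "card {x. poly (fiber_poly y) x = 0} \<le> degree (fiber_poly y)"
    by (rule card_poly_roots_bound)
  then show ?thesis
    using fiber_poly_coeffs(1)[of y] by (simp add: fiber_def poly_fiber_poly)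
qed

lemma card_fiber: "y \<noteq> 0 \<Longrightarrow> card (fiber y) = d"
  using sum_mono_inv[of "\<lambda>y. card (fiber y)" "-{0}" "\<lambda>_. d" y] sum_card_fibers
    card_fiber_le card_field by (simp add: Compl_eq_Diff_UNIV)

definition gap :: "'a \<Rightarrow> 'a" where
  "gap y = (THE x. x \<notin> fiber y)"

lemma not_in_fiber_iff:
  assumes "y \<noteq> 0" shows "x \<notin> fiber y \<longleftrightarrow> x = gap y"
proof -
  have "card (-fiber y) = 1"
    using card_fiber[OF assms] card_field by (simp add: Compl_eq_Diff_UNIV card_Diff_subset)
  then obtain g where "-fiber y = {g}" by (rule card_1_singletonE)
  then have "x \<notin> fiber y \<longleftrightarrow> x = g" for x by blast
  then show ?thesis by (simp add: gap_def)
qed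

text \<open>The missing abscissa is read off from the subleading coefficient of the fiber polynomial,
  which depends affinely on \<open>y\<close>.\<close>
lemma gap_affine: "\<exists>\<alpha> \<beta>. \<forall>y. y \<noteq> 0 \<longrightarrow> gap y = \<alpha> * y + \<beta>"
proof -
  define c where "c = eval_form d F e1"
  define K1 where "K1 = dot3 e2 (form_grad d F e1)"
  define K0 where "K0 = dot3 e3 (form_grad d F e1)"
  have "y * K1 + K0 = c * (gap y - \<Sum>UNIV)" if "y \<noteq> 0" for y
  proof -
    have "poly (fiber_poly y) x = 0" if "x \<noteq> gap y" for x
      using that not_in_fiber_iff[OF \<open>y \<noteq> 0\<close>, of x] by (auto simp: fiber_def poly_fiber_poly)
    from subtop_coeff_if_roots_all_but[OF card_field fiber_poly_coeffs(1) this]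
    show ?thesis by (simp add: fiber_poly_coeffs(2,3) c_def K1_def K0_def)
  qed
  then have "gap y = K1 / c * y + (\<Sum>UNIV + K0 / c)" if "y \<noteq> 0" for y
    using that e1_off_curve by (fastforce simp: c_def field_simps)
  then show ?thesis by blast
qed

lemma line_off_curve_chart:
  assumes "line_points l \<inter> curve_points d F = {}" "y \<noteq> 0"
    and "x * dot3 l e1 + y * dot3 l e2 + dot3 l e3 = 0"
  shows "x = gap y"
  using assms proj_class_chart_in_line_points_iff[of x y l]
    proj_class_chart_in_curve_points_iff[of x y] not_in_fiber_iff[OF assms(2)]
  by blast

context
  fixes \<alpha> \<beta> :: 'a
  assumes gap_eq: "\<And>y. y \<noteq> 0 \<Longrightarrow> gap y = \<alpha> * y + \<beta>"
begin

definition line3 :: "'a \<times> 'a \<times> 'a" where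
  "line3 = add3 r (add3 (scale3 (-\<alpha>) l2) (scale3 (-\<beta>) l1))"

lemma dot3_line3_chart: "dot3 line3 (chart x y) = x - (\<alpha> * y + \<beta>)"
  by (simp add: line3_def dot3_chart dual)

lemma dot3_line3_e1: "dot3 line3 e1 = 1"
  by (simp add: line3_def dual)

lemma line3_off_curve: "line_points line3 \<inter> curve_points d F = {}"
proof -
  have "P \<notin> line_points line3" if "P \<in> curve_points d F" for P
  proof -
    obtain x y where P: "y \<noteq> 0" "x \<in> fiber y" "P = proj_class (chart x y)"
      using \<open>P \<in> curve_points d F\<close> by (rule curve_points_chartE)
    then have "x \<noteq> \<alpha> * y + \<beta>" using not_in_fiber_iff[OF P(1), of x] P(2) gap_eq[OF P(1)] by simp
    then show ?thesis
      by (simp add: P proj_class_in_line_points_iff[OF chart_nonzero] dot3_line3_chart)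
  qed
  then show ?thesis by blast
qed

lemma line_off_curve_cases:
  assumes "2 \<le> d" "l \<noteq> (0,0,0)" and off: "line_points l \<inter> curve_points d F = {}"
  shows "line_points l \<in> {line_points l1, line_points l2, line_points line3}"
proof -
  define a b c where "a = dot3 l e1" and "b = dot3 l e2" and "c = dot3 l e3"
  have expand_l: "dot3 l v = a * dot3 r v + b * dot3 l2 v + c * dot3 l1 v" for v
    using dot3_expand[of l v] by (simp add: a_def b_def c_def)
  have on_gap: "x = \<alpha> * y + \<beta>" if "y \<noteq> 0" "a * x + b * y + c = 0" for x y
    using line_off_curve_chart[OF off that(1)] that gap_eq by (simp add: a_def b_def c_def mult.commute)
  have abc: "a \<noteq> 0 \<or> b \<noteq> 0 \<or> c \<noteq> 0"
  proof (rule ccontr)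
    assume "\<not> (a \<noteq> 0 \<or> b \<noteq> 0 \<or> c \<noteq> 0)"
    then have "dot3 v l = 0" for v by (simp add: expand_l dot3_commute[of v])
    then have "l = (0,0,0)" by (rule dot3_eq_zero_all_imp_zero)
    then show False using assms(2) by simp
  qed
  consider "a \<noteq> 0" | "a = 0" "b = 0" | "a = 0" "c = 0" | "a = 0" "b \<noteq> 0" "c \<noteq> 0"
    by blast
  then show ?thesis
  proof cases
    case 1
    have "(a * \<alpha> + b) * y + (a * \<beta> + c) = 0" if "y \<noteq> 0" for y
    proof -
      have "a * (- (b * y + c) / a) + b * y + c = 0" using 1 by simp
      then have "- (b * y + c) / a = \<alpha> * y + \<beta>" by (rule on_gap[OF that])
      then have "- (b * y + c) = a * (\<alpha> * y + \<beta>)" using 1 by (simp add: field_simps)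
      then show ?thesis by (simp add: algebra_simps neg_eq_iff_add_eq_0)
    qed
    moreover have "card (UNIV :: 'a set) > 2" using card_field assms(1) by simp
    ultimately have "a * \<alpha> + b = 0 \<and> a * \<beta> + c = 0"
      by (rule affine_eq_zero_on_nonzero[rotated])
    then have "b = - (a * \<alpha>)" "c = - (a * \<beta>)"
      by (simp_all add: eq_neg_iff_add_eq_0 add.commute)
    then have "dot3 l v = a * dot3 line3 v" for v
      by (simp add: expand_l line3_def algebra_simps)
    then have "line_points l = line_points line3"
      using 1 by (intro line_points_cong) simp
    then show ?thesis by simp
  next
    case 2
    then have "c \<noteq> 0" using abc by simp
    then have "line_points l = line_points l1"
      using 2 by (intro line_points_cong) (simp add: expand_l)
    then show ?thesis by simp
  next
    case 3
    then have "b \<noteq> 0" using abc by simp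
    then have "line_points l = line_points l2"
      using 3 by (intro line_points_cong) (simp add: expand_l)
    then show ?thesis by simp
  next
    case 4
    \<comment> \<open>the line is \<open>y = -c/b\<close>, which meets the curve in the whole fiber over \<open>-c/b\<close>\<close>
    have "- c / b \<noteq> 0" using 4 by simp
    from on_gap[OF this, of "\<alpha> * (- c / b) + \<beta> + 1"] 4 show ?thesis by simp
  qed
qed

lemma line3_ne_line1_line2:
  "line_points line3 \<noteq> line_points l1" "line_points line3 \<noteq> line_points l2"
proof -
  have e1: "proj_class e1 \<in> line_points l1" "proj_class e1 \<in> line_points l2"
    "proj_class e1 \<notin> line_points line3"
    by (simp_all add: proj_class_in_line_points_iff[OF e1_nonzero] dual dot3_line3_e1)
  show "line_points line3 \<noteq> line_points l1" using e1(1,3) by auto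
  show "line_points line3 \<noteq> line_points l2" using e1(2,3) by auto
qed

lemma lines_off_curve:
  assumes "2 \<le> d"
  shows "{L \<in> Fq_lines. L \<inter> curve_points d F = {}} =
    {line_points l1, line_points l2, line_points line3}"
proof (intro equalityI subsetI)
  fix L assume "L \<in> {L \<in> Fq_lines. L \<inter> curve_points d F = {}}"
  then have L: "L \<in> Fq_lines" "L \<inter> curve_points d F = {}" by simp_all
  then obtain l where "l \<noteq> (0,0,0)" "L = line_points l"
    unfolding Fq_lines_def by blast
  with L(2) show "L \<in> {line_points l1, line_points l2, line_points line3}"
    using line_off_curve_cases[OF assms] by simp
next
  fix L assume L: "L \<in> {line_points l1, line_points l2, line_points line3}"
  have nonzero: "l \<noteq> (0,0,0)" if "dot3 l v = 1" for l v :: "'a \<times> 'a \<times> 'a"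
    using that by auto
  have "L \<in> Fq_lines"
    using L line_points_in_Fq_lines[OF nonzero[OF dual(9)]]
      line_points_in_Fq_lines[OF nonzero[OF dual(5)]] line_points_in_Fq_lines[OF nonzero[OF dot3_line3_e1]]
    by auto
  moreover have "L \<inter> curve_points d F = {}"
    using L line1_off_curve line2_off_curve line3_off_curve by auto
  ultimately show "L \<in> {L \<in> Fq_lines. L \<inter> curve_points d F = {}}" by simp
qed

end

end

theorem corollary3p10:
  fixes F :: "'a::{finite,field} form3" and q :: nat
  assumes "q = card (UNIV :: 'a set)" and "q \<ge> 5"
    and "hom_form (q - 1) F"
    and "\<not> has_linear_component (q - 1) F"
    and "Nq (q - 1) F = (q - 1)^2"
    and "L1 \<in> Fq_lines" and "L2 \<in> Fq_lines" and "L1 \<noteq> L2"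
    and "L1 \<union> L2 \<subseteq> Zset (q - 1) F"
  shows "a0 (q - 1) F = 3"
proof -
  define d where "d = q - 1"
  obtain l1 l2 where l: "l1 \<noteq> (0,0,0)" "L1 = line_points l1" "l2 \<noteq> (0,0,0)" "L2 = line_points l2"
    using assms(6,7) unfolding Fq_lines_def by blast
  obtain r e1 e2 e3 where "dual_frame l1 l2 r e1 e2 e3"
    using dual_frame_exists l assms(8) by metis
  moreover have "line_points l1 \<inter> curve_points d F = {}" "line_points l2 \<inter> curve_points d F = {}"
    using assms(9) l by (auto simp: Zset_def d_def)
  moreover have "card (curve_points d F) = d * d"
    using assms(5) by (simp add: Nq_def d_def power2_eq_square)
  ultimately interpret curve_in_frame l1 l2 r e1 e2 e3 d F
    using assms(1-3) by (simp add: curve_in_frame_def curve_in_frame_axioms_def d_def)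
  obtain \<alpha> \<beta> where gap_eq: "\<And>y. y \<noteq> 0 \<Longrightarrow> gap y = \<alpha> * y + \<beta>"
    using gap_affine by blast
  have "a0 d F = card {L1, L2, line_points (line3 \<alpha> \<beta>)}"
    using lines_off_curve[OF gap_eq] assms(2) l by (simp add: a0_def d_def)
  also have "\<dots> = 3"
    using line3_ne_line1_line2[OF gap_eq] assms(8) l by simp
  finally show ?thesis by (simp add: d_def)
qed

end
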